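(* For every stream covering $\rho:E\to B$, the induced functors $\mathrm{T}_1(\rho):\mathrm{T}_1E\to\mathrm{T}_1B$ and $\mathrm{T}_1(\rho)^{op}:(\mathrm{T}_1E)^{op}\to(\mathrm{T}_1B)^{op}$ are op-fibrations of small categories.
   Context: Streams: a circulation on a space $X$ assigns to each open $V\subset X$ a preorder $\leqslant_V$ such that for every collection $\mathcal{O}$ of open sets, $\leqslant_{\bigcup\mathcal{O}}$ is the preorder with smallest graph containing $\bigcup_{V\in\mathcal{O}}\mathrm{graph}(\leqslant_V)$; a stream is a space with a circulation; a stream map $f:X\to Y$ is continuous with $f(x)\leqslant_V f(y)$ whenever $x\leqslant_{f^{-1}V}y$. An open substream of $X$ is an open $V$ with circulation $W\mapsto\leqslant_W$. A stream covering is a surjective stream map $\rho:E\to B$ such that $B$ is covered by open substreams whose preimages are disjoint unions of open substreams each mapped by $\rho$ isomorphically (as streams) onto the corresponding open substream. $\vec\square[1]$ is $[0,1]$ with circulation $x\leqslant_V y$ iff $x\le y$ and $[x,y]\subset V$; a dipath is a stream map from $\vec\square[1]$. The fundamental category $\mathrm{T}_1X$ has the points of $X$ as objects and, as morphisms $x\to y$, classes of dipaths $x\leadsto y$ modulo homotopy relative $\{0,1\}$ through dipaths, composed by concatenation; $\mathrm{T}_1$ is functorial in stream maps. A functor $F:\mathcal{C}\to\mathcal{D}$ is an op-fibration if for each object $c$ of $\mathcal{C}$, every morphism of $\mathcal{D}$ with source $F(c)$ lifts uniquely along $F$ to a morphism of $\mathcal{C}$ with source $c$. *)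

theory Defs
  imports "HOL-Analysis.Analysis"
begin

(* A circulation C on a space X: to each open V it assigns the relation C V,
   written x \<le>_V y as C V x y. *)

definition circ_rel :: "('a set \<Rightarrow> 'a \<Rightarrow> 'a \<Rightarrow> bool) \<Rightarrow> 'a set \<Rightarrow> ('a \<times> 'a) set" where
  "circ_rel C V = {(x, y). C V x y}"

definition is_preorder_on :: "'a set \<Rightarrow> ('a \<times> 'a) set \<Rightarrow> bool" where
  "is_preorder_on A R \<longleftrightarrow> R \<subseteq> A \<times> A \<and> (\<forall>x\<in>A. (x, x) \<in> R) \<and> trans R"

definition smallest_preorder_containing :: "'a set \<Rightarrow> ('a \<times> 'a) set \<Rightarrow> ('a \<times> 'a) set \<Rightarrow> bool" where
  "smallest_preorder_containing A G R \<longleftrightarrow>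
     is_preorder_on A R \<and> G \<subseteq> R \<and> (\<forall>R'. is_preorder_on A R' \<and> G \<subseteq> R' \<longrightarrow> R \<subseteq> R')"

definition circulation :: "'a topology \<Rightarrow> ('a set \<Rightarrow> 'a \<Rightarrow> 'a \<Rightarrow> bool) \<Rightarrow> bool" where
  "circulation X C \<longleftrightarrow>
     (\<forall>V. openin X V \<longrightarrow> is_preorder_on V (circ_rel C V)) \<and>
     (\<forall>\<O>. (\<forall>V\<in>\<O>. openin X V) \<longrightarrow>
        smallest_preorder_containing (\<Union>\<O>) (\<Union>V\<in>\<O>. circ_rel C V) (circ_rel C (\<Union>\<O>)))"

(* a stream is a pair (X, C) with circulation X C *)

definition stream_map ::
  "'a topology \<Rightarrow> ('a set \<Rightarrow> 'a \<Rightarrow> 'a \<Rightarrow> bool) \<Rightarrow>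
   'b topology \<Rightarrow> ('b set \<Rightarrow> 'b \<Rightarrow> 'b \<Rightarrow> bool) \<Rightarrow> ('a \<Rightarrow> 'b) \<Rightarrow> bool" where
  "stream_map X C Y D f \<longleftrightarrow> continuous_map X Y f \<and>
     (\<forall>V. openin Y V \<longrightarrow>
        (\<forall>x y. C {z \<in> topspace X. f z \<in> V} x y \<longrightarrow> D V (f x) (f y)))"

definition stream_iso ::
  "'a topology \<Rightarrow> ('a set \<Rightarrow> 'a \<Rightarrow> 'a \<Rightarrow> bool) \<Rightarrow>
   'b topology \<Rightarrow> ('b set \<Rightarrow> 'b \<Rightarrow> 'b \<Rightarrow> bool) \<Rightarrow> ('a \<Rightarrow> 'b) \<Rightarrow> bool" where
  "stream_iso X C Y D f \<longleftrightarrow> stream_map X C Y D f \<and>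
     (\<exists>g. stream_map Y D X C g \<and> (\<forall>x\<in>topspace X. g (f x) = x) \<and> (\<forall>y\<in>topspace Y. f (g y) = y))"

(* The open substream of (X, C) on an open U is (subtopology X U, C):
   its open sets are the open sets of X contained in U, with the same preorders. *)

definition stream_covering ::
  "'e topology \<Rightarrow> ('e set \<Rightarrow> 'e \<Rightarrow> 'e \<Rightarrow> bool) \<Rightarrow>
   'b topology \<Rightarrow> ('b set \<Rightarrow> 'b \<Rightarrow> 'b \<Rightarrow> bool) \<Rightarrow> ('e \<Rightarrow> 'b) \<Rightarrow> bool" where
  "stream_covering E C B D \<rho> \<longleftrightarrow>
     stream_map E C B D \<rho> \<and> \<rho> ` topspace E = topspace B \<and>
     (\<forall>b\<in>topspace B. \<exists>V. openin B V \<and> b \<in> V \<and>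
        (\<exists>\<U>. (\<forall>U\<in>\<U>. openin E U) \<and> pairwise disjnt \<U> \<and>
              \<Union>\<U> = {e \<in> topspace E. \<rho> e \<in> V} \<and>
              (\<forall>U\<in>\<U>. stream_iso (subtopology E U) C (subtopology B V) D \<rho>)))"

definition I01 :: "real topology" where
  "I01 = top_of_set {0..1}"

definition circ_I :: "real set \<Rightarrow> real \<Rightarrow> real \<Rightarrow> bool" where
  "circ_I V x y \<longleftrightarrow> x \<le> y \<and> {x..y} \<subseteq> V"

definition dipath :: "'a topology \<Rightarrow> ('a set \<Rightarrow> 'a \<Rightarrow> 'a \<Rightarrow> bool) \<Rightarrow> (real \<Rightarrow> 'a) \<Rightarrow> bool" where
  "dipath X C \<gamma> \<longleftrightarrow> stream_map I01 circ_I X C \<gamma>"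

definition dihomotopic ::
  "'a topology \<Rightarrow> ('a set \<Rightarrow> 'a \<Rightarrow> 'a \<Rightarrow> bool) \<Rightarrow> 'a \<Rightarrow> 'a \<Rightarrow> (real \<Rightarrow> 'a) \<Rightarrow> (real \<Rightarrow> 'a) \<Rightarrow> bool" where
  "dihomotopic X C x y \<gamma> \<delta> \<longleftrightarrow>
     homotopic_with (\<lambda>h. dipath X C h \<and> h 0 = x \<and> h 1 = y) I01 X \<gamma> \<delta>"

(* Fundamental category T_1 X: objects = topspace X;
   morphisms x \<rightarrow> y = homotopy classes of dipaths from x to y *)
definition T1_hom :: "'a topology \<Rightarrow> ('a set \<Rightarrow> 'a \<Rightarrow> 'a \<Rightarrow> bool) \<Rightarrow> 'a \<Rightarrow> 'a \<Rightarrow> (real \<Rightarrow> 'a) set set" where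
  "T1_hom X C x y =
     {{\<delta>. dihomotopic X C x y \<gamma> \<delta>} | \<gamma>. dipath X C \<gamma> \<and> \<gamma> 0 = x \<and> \<gamma> 1 = y}"

definition T1_map ::
  "'b topology \<Rightarrow> ('b set \<Rightarrow> 'b \<Rightarrow> 'b \<Rightarrow> bool) \<Rightarrow> ('a \<Rightarrow> 'b) \<Rightarrow> 'a \<Rightarrow> 'a \<Rightarrow> (real \<Rightarrow> 'a) set \<Rightarrow> (real \<Rightarrow> 'b) set" where
  "T1_map Y D f x y c = {\<delta>. \<exists>\<gamma>\<in>c. dihomotopic Y D (f x) (f y) (f \<circ> \<gamma>) \<delta>}"

(* A functor given by an object map Fo and morphism maps Fm x y : Hom1 x y \<rightarrow> Hom2 (Fo x) (Fo y). *)
definition op_fibration ::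
  "'o1 set \<Rightarrow> ('o1 \<Rightarrow> 'o1 \<Rightarrow> 'm1 set) \<Rightarrow> 'o2 set \<Rightarrow> ('o2 \<Rightarrow> 'o2 \<Rightarrow> 'm2 set) \<Rightarrow>
   ('o1 \<Rightarrow> 'o2) \<Rightarrow> ('o1 \<Rightarrow> 'o1 \<Rightarrow> 'm1 \<Rightarrow> 'm2) \<Rightarrow> bool" where
  "op_fibration Obj1 Hom1 Obj2 Hom2 Fo Fm \<longleftrightarrow>
     (\<forall>c\<in>Obj1. \<forall>d\<in>Obj2. \<forall>g\<in>Hom2 (Fo c) d.
        \<exists>!p. fst p \<in> Obj1 \<and> snd p \<in> Hom1 c (fst p) \<and> Fo (fst p) = d \<and> Fm c (fst p) (snd p) = g)"

definition op_hom :: "('o \<Rightarrow> 'o \<Rightarrow> 'm set) \<Rightarrow> 'o \<Rightarrow> 'o \<Rightarrow> 'm set" where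
  "op_hom H x y = H y x"

definition op_fmap :: "('o \<Rightarrow> 'o \<Rightarrow> 'm \<Rightarrow> 'n) \<Rightarrow> 'o \<Rightarrow> 'o \<Rightarrow> 'm \<Rightarrow> 'n" where
  "op_fmap F x y f = F y x f"

end

theory Submission
  imports Defs
begin

text \<open>
  Both statements
  say that a morphism of \<open>T\<^sub>1 B\<close> starting (resp. ending) at \<open>\<rho> c\<close> lifts uniquely
  to a morphism of \<open>T\<^sub>1 E\<close> starting (resp. ending) at \<open>c\<close>; they are proved
  together by parametrising with the endpoint \<open>a \<in> {0, 1}\<close> at which the lift is
  anchored.

  The development follows the classical covering-space argument:
  \<^item> a local-to-global principle on intervals (Lebesgue numbers);
  \<^item> lifts along a covering are unique on connected spaces;
  \<^item> continuous maps of the unit square lift, extending a lift of one edge;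
  \<^item> a continuous lift of a dipath is a dipath, because the local sections of
    the covering are stream maps and circulations are determined locally;
  \<^item> hence dipaths lift with prescribed initial or final point, and
    dihomotopies of dipaths lift to dihomotopies;
  \<^item> existence of lifted morphisms follows from dipath lifting, uniqueness from
    dihomotopy lifting.
\<close>

text \<open>This is the
  Lebesgue-number argument behind all lifting constructions below.\<close>
lemma interval_local_to_global:
  fixes R :: "real \<Rightarrow> real \<Rightarrow> bool" and x y :: real
  assumes xy: "x \<le> y"
    and concat: "\<And>a b c. x \<le> a \<Longrightarrow> a \<le> b \<Longrightarrow> b \<le> c \<Longrightarrow> c \<le> y \<Longrightarrow> R a b \<Longrightarrow> R b c \<Longrightarrow> R a c"
    and local: "\<And>z. z \<in> {x..y} \<Longrightarrow>
                  \<exists>e>0. \<forall>a b. x \<le> a \<and> a \<le> b \<and> b \<le> y \<and> z - e < a \<and> b < z + e \<longrightarrow> R a b"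
  shows "R x y"
proof -
  obtain r where r: "\<And>z. z \<in> {x..y} \<Longrightarrow> r z > 0 \<and>
      (\<forall>a b. x \<le> a \<and> a \<le> b \<and> b \<le> y \<and> z - r z < a \<and> b < z + r z \<longrightarrow> R a b)"
    using local by metis
  obtain \<delta> where "0 < \<delta>"
    and lebesgue: "\<And>T. \<lbrakk>T \<subseteq> {x..y}; diameter T < \<delta>\<rbrakk> \<Longrightarrow> \<exists>B \<in> (\<lambda>z. ball z (r z)) ` {x..y}. T \<subseteq> B"
  proof (rule Lebesgue_number_lemma [of "{x..y}" "(\<lambda>z. ball z (r z)) ` {x..y}"])
    show "{x..y} \<subseteq> \<Union> ((\<lambda>z. ball z (r z)) ` {x..y})"
      using r by force
  qed (use xy in auto)
  obtain N :: nat where N: "N > (y - x) / \<delta>" using reals_Archimedean2 by blast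
  moreover have "0 \<le> (y - x) / \<delta>" using xy \<open>0 < \<delta>\<close> by simp
  ultimately have "N > 0" by (metis of_nat_0_less_iff order_le_less_trans)
  define p where "p k = x + real k * (y - x) / N" for k
  have p_mono: "p k \<le> p (Suc k)" for k
    using xy \<open>N > 0\<close> by (simp add: p_def divide_right_mono mult_right_mono)
  have p_bounds: "x \<le> p k \<and> p k \<le> y" if "k \<le> N" for k
  proof -
    have "real k * (y - x) / N \<le> real N * (y - x) / N"
      using that xy by (intro divide_right_mono mult_right_mono) auto
    then show ?thesis using \<open>N > 0\<close> xy by (simp add: p_def)
  qed
  have step: "R (p k) (p (Suc k))" if "k < N" for k
  proof -
    have "diameter {p k .. p (Suc k)} = (y - x) / N"
      using p_mono \<open>N > 0\<close> by (simp add: p_def field_simps)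
    also have "\<dots> < \<delta>" using N \<open>0 < \<delta>\<close> \<open>N > 0\<close> by (simp add: divide_less_eq mult.commute)
    moreover have bounds: "x \<le> p k" "p (Suc k) \<le> y"
      using p_bounds[of k] p_bounds[of "Suc k"] that by auto
    ultimately obtain z where z: "z \<in> {x..y}" and sub: "{p k .. p (Suc k)} \<subseteq> ball z (r z)"
      using lebesgue[of "{p k .. p (Suc k)}"] by force
    have "p k \<in> ball z (r z)" "p (Suc k) \<in> ball z (r z)" using sub p_mono[of k] by auto
    then have "z - r z < p k" "p (Suc k) < z + r z" by (auto simp: dist_real_def)
    then show ?thesis using r[OF z] p_mono bounds by blast
  qed
  have "R x (p k)" if "k \<le> N" for k
    using that
  proof (induction k)
    case 0
    then show ?case using r[of x] xy by (force simp: p_def)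
  next
    case (Suc k)
    then have "R x (p k)" "x \<le> p k" "p (Suc k) \<le> y" using p_bounds by auto
    then show ?case using concat[of x "p k" "p (Suc k)"] step[of k] p_mono[of k] Suc.prems xy by simp
  qed
  from this[of N] show ?thesis using \<open>N > 0\<close> by (simp add: p_def)
qed

lemma topspace_I01 [simp]: "topspace I01 = {0..1}"
  by (simp add: I01_def)

lemma connected_space_Icc: "connected_space (top_of_set {a..b::real})"
  by (rule connected_space_subtopology) simp

lemma I01_square: "prod_topology (top_of_set {0..1::real}) I01 = top_of_set ({0..1} \<times> {0..1})"
  by (simp add: I01_def subtopology_Times[symmetric])

lemma continuous_map_top_of_set_mono:
  assumes "continuous_map (top_of_set S) X f" "T \<subseteq> S"
  shows "continuous_map (top_of_set T) X f"
  using continuous_map_from_subtopology[OF assms(1), of T] assms(2)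
  by (simp add: subtopology_subtopology inf.absorb2)

lemma continuous_map_paste_le:
  fixes p :: "'a::topological_space \<Rightarrow> real"
  assumes p: "continuous_on S p"
    and k1: "continuous_map (top_of_set (S \<inter> {w. p w \<le> m})) X k1"
    and k2: "continuous_map (top_of_set (S \<inter> {w. m \<le> p w})) X k2"
    and agree: "\<And>w. w \<in> S \<Longrightarrow> p w = m \<Longrightarrow> k1 w = k2 w"
  shows "continuous_map (top_of_set S) X (\<lambda>w. if p w \<le> m then k1 w else k2 w)"
proof (rule continuous_map_cases_le)
  show "continuous_map (top_of_set S) euclideanreal p" using p by simp
  have "subtopology (top_of_set S) {w \<in> topspace (top_of_set S). p w \<le> m} =
        top_of_set (S \<inter> {w. p w \<le> m})"
       "subtopology (top_of_set S) {w \<in> topspace (top_of_set S). m \<le> p w} =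
        top_of_set (S \<inter> {w. m \<le> p w})"
    by (simp_all add: subtopology_subtopology Int_def)
  then show "continuous_map (subtopology (top_of_set S) {w \<in> topspace (top_of_set S). p w \<le> m}) X k1"
    "continuous_map (subtopology (top_of_set S) {w \<in> topspace (top_of_set S). m \<le> p w}) X k2"
    using k1 k2 by simp_all
qed (use agree in auto)

lemma continuous_map_slice_fst:
  assumes "continuous_map (top_of_set (A \<times> Y)) X k" "y \<in> Y"
  shows "continuous_map (top_of_set A) X (\<lambda>s. k (s, y))"
proof -
  have "continuous_map (top_of_set A) (top_of_set (A \<times> Y)) (\<lambda>s. (s, y))"
    using assms(2) by (auto intro!: continuous_intros)
  from continuous_map_compose[OF this assms(1)] show ?thesis by (simp add: o_def)
qed

lemma continuous_map_slice_snd: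
  assumes "continuous_map (top_of_set (A \<times> Y)) X k" "s \<in> A"
  shows "continuous_map (top_of_set Y) X (\<lambda>y. k (s, y))"
proof -
  have "continuous_map (top_of_set Y) (top_of_set (A \<times> Y)) (\<lambda>y. (s, y))"
    using assms(2) by (auto intro!: continuous_intros)
  from continuous_map_compose[OF this assms(1)] show ?thesis by (simp add: o_def)
qed

lemma stream_map_compose:
  assumes f: "stream_map X C Y D f" and g: "stream_map Y D Z F g"
  shows "stream_map X C Z F (g \<circ> f)"
  unfolding stream_map_def
proof (intro conjI allI impI)
  have fc: "continuous_map X Y f" and gc: "continuous_map Y Z g"
    using f g by (auto simp: stream_map_def)
  then show "continuous_map X Z (g \<circ> f)" by (rule continuous_map_compose)
  fix W x y
  assume W: "openin Z W" and Cxy: "C {z \<in> topspace X. (g \<circ> f) z \<in> W} x y"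
  define V where "V = {y \<in> topspace Y. g y \<in> W}"
  have V: "openin Y V" unfolding V_def using gc W by (rule openin_continuous_map_preimage)
  have "{z \<in> topspace X. (g \<circ> f) z \<in> W} = {z \<in> topspace X. f z \<in> V}"
    using continuous_map_image_subset_topspace[OF fc] by (auto simp: V_def)
  then have "D V (f x) (f y)" using f V Cxy by (auto simp: stream_map_def)
  then show "F W ((g \<circ> f) x) ((g \<circ> f) y)"
    using g W by (auto simp: stream_map_def V_def)
qed

lemma dipath_continuous: "dipath X C \<gamma> \<Longrightarrow> continuous_map I01 X \<gamma>"
  unfolding dipath_def stream_map_def by (elim conjE)

lemma dipath_in_topspace: "dipath X C \<gamma> \<Longrightarrow> t \<in> {0..1} \<Longrightarrow> \<gamma> t \<in> topspace X"
  using continuous_map_image_subset_topspace[OF dipath_continuous] by fastforce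

lemma dipath_compose:
  "stream_map X C Y D f \<Longrightarrow> dipath X C \<gamma> \<Longrightarrow> dipath Y D (f \<circ> \<gamma>)"
  unfolding dipath_def by (rule stream_map_compose)

lemma dipath_cong:
  assumes "dipath X C \<gamma>" and eq: "\<And>t. t \<in> {0..1} \<Longrightarrow> \<gamma> t = \<delta> t"
  shows "dipath X C \<delta>"
  unfolding dipath_def stream_map_def
proof (intro conjI allI impI)
  show "continuous_map I01 X \<delta>"
    using dipath_continuous[OF assms(1)] by (rule continuous_map_eq) (simp add: eq)
  fix V x y
  assume V: "openin X V" and c: "circ_I {z \<in> topspace I01. \<delta> z \<in> V} x y"
  then have "x \<in> {0..1}" "y \<in> {0..1}" by (auto simp: circ_I_def)
  moreover have "{z \<in> topspace I01. \<delta> z \<in> V} = {z \<in> topspace I01. \<gamma> z \<in> V}"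
    using eq by auto
  ultimately have "C V (\<gamma> x) (\<gamma> y)"
    using assms(1) V c unfolding dipath_def stream_map_def by simp
  then show "C V (\<delta> x) (\<delta> y)" using eq \<open>x \<in> {0..1}\<close> \<open>y \<in> {0..1}\<close> by simp
qed

text \<open>In a circulation, \<open>\<le>\<^sub>W\<close> is contained in \<open>\<le>\<^sub>V\<close> for open \<open>W \<subseteq> V\<close>
  (apply the gluing axiom to the family \<open>{W, V}\<close>).\<close>
lemma circulation_mono:
  assumes circ: "circulation X C" and W: "openin X W" and V: "openin X V" and sub: "W \<subseteq> V"
    and c: "C W a b"
  shows "C V a b"
proof -
  have "\<forall>U\<in>{W, V}. openin X U" using W V by simp
  then have "smallest_preorder_containing (\<Union>{W, V}) (\<Union>U\<in>{W, V}. circ_rel C U) (circ_rel C (\<Union>{W, V}))"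
    using circ unfolding circulation_def by blast
  moreover have "\<Union>{W, V} = V" using sub by blast
  ultimately have "circ_rel C W \<subseteq> circ_rel C V"
    unfolding smallest_preorder_containing_def by auto
  then show ?thesis using c unfolding circ_rel_def by blast
qed

definition evenly_covered ::
  "'e topology \<Rightarrow> ('e set \<Rightarrow> 'e \<Rightarrow> 'e \<Rightarrow> bool) \<Rightarrow> 'b topology \<Rightarrow> ('b set \<Rightarrow> 'b \<Rightarrow> 'b \<Rightarrow> bool) \<Rightarrow>
   ('e \<Rightarrow> 'b) \<Rightarrow> 'b set \<Rightarrow> bool" where
  "evenly_covered E C B D \<rho> V \<longleftrightarrow> openin B V \<and>
     (\<exists>\<U>. (\<forall>U\<in>\<U>. openin E U) \<and> pairwise disjnt \<U> \<and>
              \<Union>\<U> = {e \<in> topspace E. \<rho> e \<in> V} \<and>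
              (\<forall>U\<in>\<U>. stream_iso (subtopology E U) C (subtopology B V) D \<rho>))"

definition local_section ::
  "'e topology \<Rightarrow> ('e set \<Rightarrow> 'e \<Rightarrow> 'e \<Rightarrow> bool) \<Rightarrow> 'b topology \<Rightarrow> ('b set \<Rightarrow> 'b \<Rightarrow> 'b \<Rightarrow> bool) \<Rightarrow>
   ('e \<Rightarrow> 'b) \<Rightarrow> 'e set \<Rightarrow> 'b set \<Rightarrow> ('b \<Rightarrow> 'e) \<Rightarrow> bool" where
  "local_section E C B D \<rho> U V g \<longleftrightarrow> openin E U \<and> openin B V \<and> (\<forall>x\<in>U. \<rho> x \<in> V) \<and>
     stream_map (subtopology B V) D (subtopology E U) C g \<and>
     (\<forall>x\<in>U. g (\<rho> x) = x) \<and> (\<forall>y\<in>V. \<rho> (g y) = y)"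

lemma covering_stream_map: "stream_covering E C B D \<rho> \<Longrightarrow> stream_map E C B D \<rho>"
  unfolding stream_covering_def by blast

lemma covering_continuous: "stream_covering E C B D \<rho> \<Longrightarrow> continuous_map E B \<rho>"
  unfolding stream_covering_def stream_map_def by blast

lemma covering_evenly_covered:
  assumes "stream_covering E C B D \<rho>" "b \<in> topspace B"
  obtains V where "b \<in> V" "evenly_covered E C B D \<rho> V"
proof -
  have "\<exists>V. b \<in> V \<and> evenly_covered E C B D \<rho> V"
    using assms unfolding stream_covering_def evenly_covered_def by blast
  then show ?thesis using that by blast
qed

lemma evenly_covered_local_section:
  assumes ev: "evenly_covered E C B D \<rho> V" and e: "e \<in> topspace E" "\<rho> e \<in> V"
  obtains U g where "e \<in> U" "local_section E C B D \<rho> U V g"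
proof -
  have "openin B V" using ev unfolding evenly_covered_def by (elim conjE)
  obtain \<U> where open_sheets: "\<forall>U\<in>\<U>. openin E U" and un: "\<Union>\<U> = {e \<in> topspace E. \<rho> e \<in> V}"
    and iso: "\<forall>U\<in>\<U>. stream_iso (subtopology E U) C (subtopology B V) D \<rho>"
    using ev unfolding evenly_covered_def by (elim conjE exE) (rule that)
  have "e \<in> \<Union>\<U>" using un e by simp
  then obtain U where U: "U \<in> \<U>" "e \<in> U" by blast
  then have "openin E U" using open_sheets by blast
  have "stream_iso (subtopology E U) C (subtopology B V) D \<rho>" using iso U by blast
  then obtain g where g: "stream_map (subtopology B V) D (subtopology E U) C g"
    "\<forall>x\<in>topspace (subtopology E U). g (\<rho> x) = x" "\<forall>y\<in>topspace (subtopology B V). \<rho> (g y) = y"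
    unfolding stream_iso_def by (elim conjE exE) (rule that)
  have "local_section E C B D \<rho> U V g"
    unfolding local_section_def
  proof (intro conjI ballI)
    show "\<rho> x \<in> V" if "x \<in> U" for x
    proof -
      have "x \<in> \<Union>\<U>" using that U by blast
      then show ?thesis using un by simp
    qed
    show "g (\<rho> x) = x" if "x \<in> U" for x
      using that g(2) openin_subset[OF \<open>openin E U\<close>] by auto
    show "\<rho> (g y) = y" if "y \<in> V" for y
      using that g(3) openin_subset[OF \<open>openin B V\<close>] by auto
  qed (use g \<open>openin B V\<close> \<open>openin E U\<close> in auto)
  then show ?thesis using U that by blast
qed

text \<open>Two points of a fibre have neighbourhoods in which points of a common fibre
  coincide exactly when the two given points do: the sheets are disjoint and \<open>\<rho>\<close>
  is injective on each of them.\<close>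
lemma covering_separates_fibres:
  assumes cov: "stream_covering E C B D \<rho>" and e: "e1 \<in> topspace E" "e2 \<in> topspace E"
    and eq: "\<rho> e1 = \<rho> e2"
  obtains U1 U2 where "openin E U1" "openin E U2" "e1 \<in> U1" "e2 \<in> U2"
    "\<And>x y. x \<in> U1 \<Longrightarrow> y \<in> U2 \<Longrightarrow> \<rho> x = \<rho> y \<Longrightarrow> (x = y \<longleftrightarrow> e1 = e2)"
proof -
  have "\<rho> e1 \<in> topspace B" using continuous_map_image_subset_topspace[OF covering_continuous[OF cov]] e by blast
  then obtain V where "\<rho> e1 \<in> V" "evenly_covered E C B D \<rho> V"
    using covering_evenly_covered[OF cov] by blast
  then obtain \<U> where open_sheets: "\<forall>U\<in>\<U>. openin E U" and disj: "pairwise disjnt \<U>"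
    and un: "\<Union>\<U> = {e \<in> topspace E. \<rho> e \<in> V}"
    and iso: "\<forall>U\<in>\<U>. stream_iso (subtopology E U) C (subtopology B V) D \<rho>"
    and "\<rho> e1 \<in> V"
    unfolding evenly_covered_def by (elim conjE exE) (rule that)
  then have "e1 \<in> \<Union>\<U>" "e2 \<in> \<Union>\<U>" using e eq by auto
  then obtain U1 U2 where U1: "U1 \<in> \<U>" "e1 \<in> U1" and U2: "U2 \<in> \<U>" "e2 \<in> U2"
    by blast
  have inj: "x = y" if "U \<in> \<U>" "x \<in> U" "y \<in> U" "\<rho> x = \<rho> y" for U x y
  proof -
    obtain g where g: "\<forall>x\<in>topspace (subtopology E U). g (\<rho> x) = x"
      using iso \<open>U \<in> \<U>\<close> unfolding stream_iso_def by blast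
    have "U \<subseteq> topspace E" using open_sheets \<open>U \<in> \<U>\<close> openin_subset by blast
    then have "x \<in> topspace (subtopology E U)" "y \<in> topspace (subtopology E U)"
      using that by auto
    then show "x = y" using g \<open>\<rho> x = \<rho> y\<close> by metis
  qed
  show ?thesis
  proof
    show "openin E U1" "openin E U2" using open_sheets U1 U2 by auto
    fix x y assume xy: "x \<in> U1" "y \<in> U2" "\<rho> x = \<rho> y"
    show "x = y \<longleftrightarrow> e1 = e2"
    proof (cases "U1 = U2")
      case True
      then show ?thesis using inj[OF U1(1)] xy U1 U2 eq by blast
    next
      case False
      then have "disjnt U1 U2" using disj U1 U2 by (meson pairwiseD)
      then show ?thesis using xy U1 U2 unfolding disjnt_def by blast
    qed
  qed (use U1 U2 in auto)
qed

text \<open>Uniqueness of lifts: two continuous lifts of the same map on a connected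
  space that agree at one point agree everywhere, since the agreement set is
  open and closed.\<close>
lemma lifts_agree_on_connected:
  assumes cov: "stream_covering E C B D \<rho>"
    and ka: "continuous_map Z E ka" and kb: "continuous_map Z E kb"
    and eq: "\<And>z. z \<in> topspace Z \<Longrightarrow> \<rho> (ka z) = \<rho> (kb z)"
    and con: "connected_space Z" and z0: "z0 \<in> topspace Z" "ka z0 = kb z0"
    and z: "z \<in> topspace Z"
  shows "ka z = kb z"
proof -
  define A where "A = {z \<in> topspace Z. ka z = kb z}"
  have locally_constant: "\<exists>T. openin Z T \<and> w \<in> T \<and> (\<forall>w'\<in>T. w' \<in> A \<longleftrightarrow> w \<in> A)"
    if w: "w \<in> topspace Z" for w
  proof -
    have "ka w \<in> topspace E" "kb w \<in> topspace E"
      using continuous_map_image_subset_topspace[OF ka] continuous_map_image_subset_topspace[OF kb] w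
      by blast+
    then obtain U1 U2 where U: "openin E U1" "openin E U2" "ka w \<in> U1" "kb w \<in> U2"
      and sep: "\<And>x y. x \<in> U1 \<Longrightarrow> y \<in> U2 \<Longrightarrow> \<rho> x = \<rho> y \<Longrightarrow> (x = y \<longleftrightarrow> ka w = kb w)"
      using covering_separates_fibres[OF cov _ _ eq[OF w]] by blast
    define T where "T = {z \<in> topspace Z. ka z \<in> U1} \<inter> {z \<in> topspace Z. kb z \<in> U2}"
    have "openin Z T" unfolding T_def
      using openin_continuous_map_preimage[OF ka U(1)] openin_continuous_map_preimage[OF kb U(2)]
      by (rule openin_Int)
    moreover have "w' \<in> A \<longleftrightarrow> w \<in> A" if "w' \<in> T" for w'
    proof -
      have "w' \<in> topspace Z" "ka w' \<in> U1" "kb w' \<in> U2" using that by (auto simp: T_def)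
      then have "ka w' = kb w' \<longleftrightarrow> ka w = kb w" using sep eq by blast
      then show ?thesis using \<open>w' \<in> topspace Z\<close> w by (simp add: A_def)
    qed
    moreover have "w \<in> T" using w U by (simp add: T_def)
    ultimately show ?thesis by blast
  qed
  have "openin Z A"
  proof (subst openin_subopen, intro ballI)
    fix w assume "w \<in> A"
    with locally_constant obtain T where "openin Z T" "w \<in> T" "\<forall>w'\<in>T. w' \<in> A \<longleftrightarrow> w \<in> A"
      unfolding A_def by blast
    then show "\<exists>T. openin Z T \<and> w \<in> T \<and> T \<subseteq> A" using \<open>w \<in> A\<close> by blast
  qed
  moreover have "openin Z (topspace Z - A)"
  proof (subst openin_subopen, intro ballI)
    fix w assume "w \<in> topspace Z - A"
    with locally_constant obtain T where "openin Z T" "w \<in> T" "\<forall>w'\<in>T. w' \<in> A \<longleftrightarrow> w \<in> A"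
      by blast
    then show "\<exists>T. openin Z T \<and> w \<in> T \<and> T \<subseteq> topspace Z - A"
      using \<open>w \<in> topspace Z - A\<close> openin_subset by blast
  qed
  then have "closedin Z A" unfolding closedin_def A_def by auto
  ultimately have "A = {} \<or> A = topspace Z" using con connected_space_clopen_in by blast
  then show ?thesis using z0 z A_def by auto
qed

text \<open>Sections of the covering preserve the circulation: a path in a sheet whose
  image is a dipath of the base is directed inside every open subset of the sheet.\<close>
lemma local_section_directed:
  assumes sec: "local_section E C B D \<rho> U V g" and W: "openin E W" "W \<subseteq> U"
    and \<delta>: "dipath B D \<delta>" and ab: "a \<le> b" "{a..b} \<subseteq> {0..1}"
    and \<gamma>: "\<And>t. t \<in> {a..b} \<Longrightarrow> \<gamma> t \<in> W \<and> \<rho> (\<gamma> t) = \<delta> t"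
  shows "C W (\<gamma> a) (\<gamma> b)"
proof -
  have V: "openin B V" and g: "stream_map (subtopology B V) D (subtopology E U) C g"
    and g_inv: "\<And>x. x \<in> U \<Longrightarrow> g (\<rho> x) = x" and \<rho>UV: "\<And>x. x \<in> U \<Longrightarrow> \<rho> x \<in> V"
    using sec unfolding local_section_def by blast+
  have WU: "openin (subtopology E U) W"
    using openin_subtopology_Int2[OF W(1), of U] W(2) by (simp add: inf.absorb2)
  define WB where "WB = {q \<in> topspace (subtopology B V). g q \<in> W}"
  have "openin (subtopology B V) WB"
    unfolding WB_def using g WU unfolding stream_map_def by (blast intro: openin_continuous_map_preimage)
  then have WB: "openin B WB" using V openin_trans_full by blast
  have "{a..b} \<subseteq> {t \<in> topspace I01. \<delta> t \<in> WB}"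
  proof
    fix t assume t: "t \<in> {a..b}"
    then have "\<gamma> t \<in> W" "\<rho> (\<gamma> t) = \<delta> t" using \<gamma> by auto
    then have "\<gamma> t \<in> U" "g (\<delta> t) \<in> W" using W(2) g_inv by (metis subsetD)+
    moreover have "\<delta> t \<in> V" using \<rho>UV \<open>\<gamma> t \<in> U\<close> \<open>\<rho> (\<gamma> t) = \<delta> t\<close> by metis
    ultimately show "t \<in> {t \<in> topspace I01. \<delta> t \<in> WB}"
      using openin_subset[OF V] t ab(2) by (auto simp: WB_def)
  qed
  then have "D WB (\<delta> a) (\<delta> b)"
    using \<delta> WB ab(1) unfolding dipath_def stream_map_def circ_I_def by blast
  then have "C W (g (\<delta> a)) (g (\<delta> b))"
    using g WU unfolding stream_map_def WB_def by blast
  moreover have "a \<in> {a..b}" "b \<in> {a..b}" using ab(1) by auto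
  ultimately show ?thesis using \<gamma> W(2) g_inv by (metis subsetD)
qed

text \<open>Local part of the next lemma: near each parameter \<open>z\<close> with \<open>\<gamma> z \<in> V'\<close>, a
  continuous lift \<open>\<gamma>\<close> of a dipath runs inside a single sheet, where it is directed
  by the previous lemma; by monotonicity of the circulation it is then directed
  in \<open>V'\<close>.\<close>
lemma continuous_lift_locally_directed:
  assumes cov: "stream_covering E C B D \<rho>" and circE: "circulation E C"
    and \<gamma>: "continuous_map I01 E \<gamma>" and \<delta>: "dipath B D \<delta>"
    and lift: "\<And>t. t \<in> {0..1} \<Longrightarrow> \<rho> (\<gamma> t) = \<delta> t"
    and V': "openin E V'" and z: "z \<in> {0..1}" "\<gamma> z \<in> V'"
  obtains e where "e > 0"
    "\<And>a b. 0 \<le> a \<Longrightarrow> a \<le> b \<Longrightarrow> b \<le> 1 \<Longrightarrow> z - e < a \<Longrightarrow> b < z + e \<Longrightarrow> C V' (\<gamma> a) (\<gamma> b)"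
proof -
  have "\<gamma> z \<in> topspace E" using openin_subset[OF V'] z by blast
  then obtain V where "\<rho> (\<gamma> z) \<in> V" and "evenly_covered E C B D \<rho> V"
    using covering_evenly_covered[OF cov] continuous_map_image_subset_topspace[OF covering_continuous[OF cov]]
    by blast
  then obtain U g where "\<gamma> z \<in> U" and sec: "local_section E C B D \<rho> U V g"
    using evenly_covered_local_section \<open>\<gamma> z \<in> topspace E\<close> by metis
  define W where "W = U \<inter> V'"
  have W: "openin E W" "W \<subseteq> U" "W \<subseteq> V'"
    using sec V' unfolding W_def local_section_def by auto
  have "openin (top_of_set {0..1}) {t \<in> {0..1}. \<gamma> t \<in> W}"
    using openin_continuous_map_preimage[OF \<gamma> W(1)] by (simp add: I01_def)
  moreover have "z \<in> {t \<in> {0..1}. \<gamma> t \<in> W}"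
    using z \<open>\<gamma> z \<in> U\<close> by (simp add: W_def)
  ultimately obtain e where "e > 0" and e: "\<And>t. t \<in> {0..1} \<Longrightarrow> dist t z < e \<Longrightarrow> \<gamma> t \<in> W"
    unfolding openin_euclidean_subtopology_iff by blast
  have "C V' (\<gamma> a) (\<gamma> b)" if ab: "0 \<le> a" "a \<le> b" "b \<le> 1" "z - e < a" "b < z + e" for a b
  proof -
    have "{a..b} \<subseteq> {0..1}" using ab by auto
    moreover have "\<gamma> t \<in> W \<and> \<rho> (\<gamma> t) = \<delta> t" if "t \<in> {a..b}" for t
      using that ab \<open>{a..b} \<subseteq> {0..1}\<close> e lift by (auto simp: dist_real_def)
    ultimately have "C W (\<gamma> a) (\<gamma> b)"
      using local_section_directed[OF sec W(1,2) \<delta> ab(2)] by blast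
    then show ?thesis using circulation_mono[OF circE W(1) V' W(3)] by blast
  qed
  then show ?thesis using \<open>e > 0\<close> that by blast
qed

text \<open>A continuous lift of a dipath is a dipath: the order relation of the
  circulation along the lift holds locally (previous lemma), hence globally by
  transitivity and the local-to-global principle.\<close>
lemma continuous_lift_is_dipath:
  assumes cov: "stream_covering E C B D \<rho>" and circE: "circulation E C"
    and \<gamma>: "continuous_map I01 E \<gamma>" and \<delta>: "dipath B D \<delta>"
    and lift: "\<And>t. t \<in> {0..1} \<Longrightarrow> \<rho> (\<gamma> t) = \<delta> t"
  shows "dipath E C \<gamma>"
  unfolding dipath_def stream_map_def
proof (intro conjI allI impI)
  show "continuous_map I01 E \<gamma>" by (rule \<gamma>)
  fix V' x y assume V': "openin E V'" and "circ_I {z \<in> topspace I01. \<gamma> z \<in> V'} x y"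
  then have xy: "x \<le> y" and inV': "{x..y} \<subseteq> {z \<in> {0..1}. \<gamma> z \<in> V'}"
    unfolding circ_I_def by auto
  then have "0 \<le> x" "y \<le> 1" by auto
  have "trans (circ_rel C V')" using circE V' unfolding circulation_def is_preorder_on_def by blast
  then have concat: "C V' (\<gamma> a) (\<gamma> c)" if "C V' (\<gamma> a) (\<gamma> b)" "C V' (\<gamma> b) (\<gamma> c)" for a b c
    using that unfolding circ_rel_def trans_def by blast
  show "C V' (\<gamma> x) (\<gamma> y)"
  proof (rule interval_local_to_global[where R = "\<lambda>a b. C V' (\<gamma> a) (\<gamma> b)", OF xy])
    fix z assume "z \<in> {x..y}"
    then have "z \<in> {0..1}" "\<gamma> z \<in> V'" using inV' by auto
    then obtain e where "e > 0" and e: "\<And>a b. 0 \<le> a \<Longrightarrow> a \<le> b \<Longrightarrow> b \<le> 1 \<Longrightarrow> z - e < a \<Longrightarrow>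
        b < z + e \<Longrightarrow> C V' (\<gamma> a) (\<gamma> b)"
      using continuous_lift_locally_directed[OF cov circE \<gamma> \<delta> lift V'] by blast
    have "C V' (\<gamma> a) (\<gamma> b)" if "x \<le> a" "a \<le> b" "b \<le> y" "z - e < a" "b < z + e" for a b
      by (rule e) (use that \<open>0 \<le> x\<close> \<open>y \<le> 1\<close> in linarith)+
    then show "\<exists>e>0. \<forall>a b. x \<le> a \<and> a \<le> b \<and> b \<le> y \<and> z - e < a \<and> b < z + e \<longrightarrow> C V' (\<gamma> a) (\<gamma> b)"
      using \<open>e > 0\<close> by blast
  qed (use concat in blast)
qed

definition lifts_on :: "'e topology \<Rightarrow> ('e \<Rightarrow> 'b) \<Rightarrow> ('a::topological_space \<Rightarrow> 'b) \<Rightarrow> 'a set \<Rightarrow> ('a \<Rightarrow> 'e) \<Rightarrow> bool"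
  where "lifts_on E \<rho> h S k \<longleftrightarrow> continuous_map (top_of_set S) E k \<and> (\<forall>w\<in>S. \<rho> (k w) = h w)"

lemma local_section_lifts:
  assumes sec: "local_section E C B D \<rho> U V g"
    and h: "continuous_map (top_of_set S) B h" "h ` S \<subseteq> V"
  shows "lifts_on E \<rho> h S (g \<circ> h)"
proof -
  have "continuous_map (subtopology B V) (subtopology E U) g"
    using sec unfolding local_section_def stream_map_def by blast
  moreover have "continuous_map (top_of_set S) (subtopology B V) h"
    using h by (auto simp: continuous_map_in_subtopology)
  ultimately have "continuous_map (top_of_set S) E (g \<circ> h)"
    using continuous_map_compose continuous_map_into_fulltopology by blast
  moreover have "\<rho> (g (h w)) = h w" if "w \<in> S" for w
    using sec h(2) that unfolding local_section_def by blast
  ultimately show ?thesis unfolding lifts_on_def by simp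
qed

lemma lifts_on_paste:
  fixes p :: "'a::topological_space \<Rightarrow> real"
  assumes p: "continuous_on S p"
    and k1: "lifts_on E \<rho> h S1 k1" "S \<inter> {w. p w \<le> m} \<subseteq> S1"
    and k2: "lifts_on E \<rho> h S2 k2" "S \<inter> {w. m \<le> p w} \<subseteq> S2"
    and agree: "\<And>w. w \<in> S \<Longrightarrow> p w = m \<Longrightarrow> k1 w = k2 w"
  shows "lifts_on E \<rho> h S (\<lambda>w. if p w \<le> m then k1 w else k2 w)"
  unfolding lifts_on_def
proof
  show "continuous_map (top_of_set S) E (\<lambda>w. if p w \<le> m then k1 w else k2 w)"
  proof (rule continuous_map_paste_le[OF p _ _ agree])
    show "continuous_map (top_of_set (S \<inter> {w. p w \<le> m})) E k1"
      using k1 continuous_map_top_of_set_mono unfolding lifts_on_def by blast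
    show "continuous_map (top_of_set (S \<inter> {w. m \<le> p w})) E k2"
      using k2 continuous_map_top_of_set_mono unfolding lifts_on_def by blast
  qed
  show "\<forall>w\<in>S. \<rho> (if p w \<le> m then k1 w else k2 w) = h w"
    using k1 k2 unfolding lifts_on_def by auto
qed

lemma diameter_rectangle_le:
  fixes a b c d :: real
  assumes "a \<le> b" "c \<le> d"
  shows "diameter ({a..b} \<times> {c..d}) \<le> (b - a) + (d - c)"
proof (rule diameter_le)
  fix x y assume "x \<in> {a..b} \<times> {c..d}" "y \<in> {a..b} \<times> {c..d}"
  then have bounds: "\<bar>fst x - fst y\<bar> \<le> b - a" "\<bar>snd x - snd y\<bar> \<le> d - c"
    by (auto simp: abs_le_iff mem_Times_iff)
  have "norm (x - y) = sqrt (\<bar>fst x - fst y\<bar>\<^sup>2 + \<bar>snd x - snd y\<bar>\<^sup>2)"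
    by (cases x, cases y) (simp add: norm_Pair)
  also have "\<dots> \<le> \<bar>fst x - fst y\<bar> + \<bar>snd x - snd y\<bar>"
    by (rule sqrt_sum_squares_le_sum) auto
  finally show "norm (x - y) \<le> (b - a) + (d - c)" using bounds by linarith
qed (use assms in auto)

lemma evenly_covered_lebesgue_number:
  fixes Q :: "'a::metric_space set"
  assumes cov: "stream_covering E C B D \<rho>" and Q: "compact Q" "Q \<noteq> {}"
    and h: "continuous_map (top_of_set Q) B h"
  obtains \<delta> where "0 < \<delta>"
    "\<And>T. T \<subseteq> Q \<Longrightarrow> diameter T < \<delta> \<Longrightarrow> \<exists>V. evenly_covered E C B D \<rho> V \<and> h ` T \<subseteq> V"
proof -
  define \<C> where "\<C> = {G. open G \<and> (\<exists>V. evenly_covered E C B D \<rho> V \<and> h ` (Q \<inter> G) \<subseteq> V)}"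
  have "Q \<subseteq> \<Union>\<C>"
  proof
    fix w assume w: "w \<in> Q"
    then have "h w \<in> topspace B" using continuous_map_image_subset_topspace[OF h] by auto
    then obtain V where "h w \<in> V" and ev: "evenly_covered E C B D \<rho> V"
      using covering_evenly_covered[OF cov] by blast
    have "openin (top_of_set Q) {x \<in> Q. h x \<in> V}"
      using openin_continuous_map_preimage[OF h] ev unfolding evenly_covered_def by auto
    then obtain G where "open G" "{x \<in> Q. h x \<in> V} = Q \<inter> G" unfolding openin_open by blast
    then have "G \<in> \<C>" using ev unfolding \<C>_def by blast
    moreover have "w \<in> G" using \<open>{x \<in> Q. h x \<in> V} = Q \<inter> G\<close> w \<open>h w \<in> V\<close> by blast
    ultimately show "w \<in> \<Union>\<C>" by blast
  qed
  moreover have "\<C> \<noteq> {}" using \<open>Q \<subseteq> \<Union>\<C>\<close> Q(2) by blast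
  moreover have "\<And>G. G \<in> \<C> \<Longrightarrow> open G" unfolding \<C>_def by blast
  ultimately obtain \<delta> where "0 < \<delta>" and \<delta>: "\<And>T. T \<subseteq> Q \<Longrightarrow> diameter T < \<delta> \<Longrightarrow> \<exists>G\<in>\<C>. T \<subseteq> G"
    using Lebesgue_number_lemma[OF Q(1)] by metis
  show ?thesis
  proof (rule that[OF \<open>0 < \<delta>\<close>])
    fix T assume "T \<subseteq> Q" "diameter T < \<delta>"
    then obtain G where "G \<in> \<C>" "T \<subseteq> G" using \<delta> by blast
    then show "\<exists>V. evenly_covered E C B D \<rho> V \<and> h ` T \<subseteq> V"
      using \<open>T \<subseteq> Q\<close> unfolding \<C>_def by blast
  qed
qed

text \<open>Local step for the next lemma: around each height \<open>y\<^sub>0\<close>, every short piece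
  \<open>[a, b] \<times> [c, d]\<close> of a thin strip has diameter below the Lebesgue number \<open>\<delta>\<close>, so
  it is mapped into an evenly covered set, and the local section through the
  prescribed edge point \<open>f y\<^sub>0\<close> lifts it compatibly with \<open>f\<close>.\<close>
lemma lift_over_strip_locally:
  fixes h :: "real \<times> real \<Rightarrow> 'b" and f :: "real \<Rightarrow> 'e"
  assumes h: "continuous_map (top_of_set ({0..1} \<times> {0..1})) B h"
    and small: "\<And>T. T \<subseteq> {0..1} \<times> {0..1} \<Longrightarrow> diameter T < \<delta> \<Longrightarrow>
                  \<exists>V. evenly_covered E C B D \<rho> V \<and> h ` T \<subseteq> V"
    and ab: "0 \<le> a" "a \<le> b" "b \<le> 1" "b - a < \<delta> / 2"
    and f: "continuous_map (top_of_set {0..1}) E f" "\<And>y. y \<in> {0..1} \<Longrightarrow> \<rho> (f y) = h (a, y)"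
    and y0: "y0 \<in> {0..1}"
  obtains e where "e > 0" "\<And>c d. 0 \<le> c \<Longrightarrow> c \<le> d \<Longrightarrow> d \<le> 1 \<Longrightarrow> y0 - e < c \<Longrightarrow> d < y0 + e \<Longrightarrow>
      \<exists>k. lifts_on E \<rho> h ({a..b} \<times> {c..d}) k \<and> (\<forall>y\<in>{c..d}. k (a, y) = f y)"
proof -
  have "0 < \<delta>" using ab by linarith
  define c0 d0 where "c0 = max 0 (y0 - \<delta> / 4)" and "d0 = min 1 (y0 + \<delta> / 4)"
  have "c0 \<le> y0" "y0 \<le> d0" using y0 \<open>0 < \<delta>\<close> by (auto simp: c0_def d0_def)
  define T where "T = {a..b} \<times> {c0..d0}"
  have "diameter T \<le> (b - a) + (d0 - c0)"
    unfolding T_def using ab \<open>c0 \<le> y0\<close> \<open>y0 \<le> d0\<close> by (intro diameter_rectangle_le) auto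
  also have "\<dots> < \<delta>" using ab by (auto simp: c0_def d0_def)
  finally obtain V where ev: "evenly_covered E C B D \<rho> V" and hV: "h ` T \<subseteq> V"
    using small[of T] ab by (force simp: T_def c0_def d0_def)
  have "(a, y0) \<in> T" using ab \<open>c0 \<le> y0\<close> \<open>y0 \<le> d0\<close> by (simp add: T_def)
  then have "\<rho> (f y0) \<in> V" using hV f(2) y0 by auto
  moreover have "f y0 \<in> topspace E" using continuous_map_image_subset_topspace[OF f(1)] y0 by auto
  ultimately obtain U g where "f y0 \<in> U" and sec: "local_section E C B D \<rho> U V g"
    using evenly_covered_local_section[OF ev] by metis
  have "openin (top_of_set {0..1}) {y \<in> {0..1}. f y \<in> U}"
    using openin_continuous_map_preimage[OF f(1)] sec unfolding local_section_def by auto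
  then obtain e where "e > 0" and e: "\<And>y. y \<in> {0..1} \<Longrightarrow> dist y y0 < e \<Longrightarrow> f y \<in> U"
    using y0 \<open>f y0 \<in> U\<close> unfolding openin_euclidean_subtopology_iff by blast
  have "\<exists>k. lifts_on E \<rho> h ({a..b} \<times> {c..d}) k \<and> (\<forall>y\<in>{c..d}. k (a, y) = f y)"
    if cd: "0 \<le> c" "c \<le> d" "d \<le> 1" "y0 - min e (\<delta> / 4) < c" "d < y0 + min e (\<delta> / 4)" for c d
  proof -
    have sub: "{a..b} \<times> {c..d} \<subseteq> T" using cd by (auto simp: T_def c0_def d0_def)
    have "continuous_map (top_of_set ({a..b} \<times> {c..d})) B h"
      by (rule continuous_map_top_of_set_mono[OF h]) (use ab cd in auto)
    then have "lifts_on E \<rho> h ({a..b} \<times> {c..d}) (g \<circ> h)"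
      using local_section_lifts[OF sec] sub hV by blast
    moreover have "(g \<circ> h) (a, y) = f y" if "y \<in> {c..d}" for y
    proof -
      have "y \<in> {0..1}" "dist y y0 < e" using that cd by (auto simp: dist_real_def)
      then have "f y \<in> U" using e by blast
      then show ?thesis using sec f(2) \<open>y \<in> {0..1}\<close> unfolding local_section_def by force
    qed
    ultimately show ?thesis by blast
  qed
  moreover have "min e (\<delta> / 4) > 0" using \<open>e > 0\<close> \<open>0 < \<delta>\<close> by simp
  ultimately show ?thesis using that by blast
qed

text \<open>Lifting over a thin vertical strip \<open>[a, b] \<times> [0, 1]\<close> of the square with
  prescribed left edge: the local lifts of the previous lemma are glued along
  the strip, neighbouring pieces agreeing on their common edge by uniqueness of
  lifts.\<close>
lemma lift_over_strip:
  fixes h :: "real \<times> real \<Rightarrow> 'b" and f :: "real \<Rightarrow> 'e"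
  assumes cov: "stream_covering E C B D \<rho>"
    and h: "continuous_map (top_of_set ({0..1} \<times> {0..1})) B h"
    and small: "\<And>T. T \<subseteq> {0..1} \<times> {0..1} \<Longrightarrow> diameter T < \<delta> \<Longrightarrow>
                  \<exists>V. evenly_covered E C B D \<rho> V \<and> h ` T \<subseteq> V"
    and ab: "0 \<le> a" "a \<le> b" "b \<le> 1" "b - a < \<delta> / 2"
    and f: "continuous_map (top_of_set {0..1}) E f" "\<And>y. y \<in> {0..1} \<Longrightarrow> \<rho> (f y) = h (a, y)"
  shows "\<exists>k. lifts_on E \<rho> h ({a..b} \<times> {0..1}) k \<and> (\<forall>y\<in>{0..1}. k (a, y) = f y)"
proof -
  define R where "R c d \<longleftrightarrow>
      (\<exists>k. lifts_on E \<rho> h ({a..b} \<times> {c..d}) k \<and> (\<forall>y\<in>{c..d}. k (a, y) = f y))" for c d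
  have "R 0 1"
  proof (rule interval_local_to_global[where R = R])
    fix c d e :: real assume cde: "0 \<le> c" "c \<le> d" "d \<le> e" "e \<le> 1" and "R c d" "R d e"
    then obtain k1 k2 where k1: "lifts_on E \<rho> h ({a..b} \<times> {c..d}) k1" "\<forall>y\<in>{c..d}. k1 (a, y) = f y"
      and k2: "lifts_on E \<rho> h ({a..b} \<times> {d..e}) k2" "\<forall>y\<in>{d..e}. k2 (a, y) = f y"
      unfolding R_def by blast
    have agree: "k1 (s, d) = k2 (s, d)" if s: "s \<in> {a..b}" for s
    proof -
      have c1: "continuous_map (top_of_set {a..b}) E (\<lambda>s. k1 (s, d))"
        and c2: "continuous_map (top_of_set {a..b}) E (\<lambda>s. k2 (s, d))"
        using k1(1) k2(1) cde unfolding lifts_on_def by (auto intro: continuous_map_slice_fst)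
      have "\<rho> (k1 (s', d)) = \<rho> (k2 (s', d))" if "s' \<in> topspace (top_of_set {a..b})" for s'
        using that k1(1) k2(1) cde unfolding lifts_on_def by auto
      moreover have "k1 (a, d) = k2 (a, d)" using k1(2) k2(2) cde by auto
      ultimately show ?thesis
        using lifts_agree_on_connected[OF cov c1 c2 _ connected_space_Icc, of a s] ab(2) s by simp
    qed
    have "lifts_on E \<rho> h ({a..b} \<times> {c..e}) (\<lambda>w. if snd w \<le> d then k1 w else k2 w)"
      by (rule lifts_on_paste[OF _ k1(1) _ k2(1)]) (use agree in \<open>auto intro: continuous_intros\<close>)
    then show "R c e" unfolding R_def using k1(2) k2(2) by force
  next
    fix y0 :: real assume "y0 \<in> {0..1}"
    then obtain e where "e > 0" and "\<And>c d. 0 \<le> c \<Longrightarrow> c \<le> d \<Longrightarrow> d \<le> 1 \<Longrightarrow> y0 - e < c \<Longrightarrow>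
        d < y0 + e \<Longrightarrow> R c d"
      using lift_over_strip_locally[OF h small ab f] unfolding R_def by blast
    then show "\<exists>e>0. \<forall>c d. 0 \<le> c \<and> c \<le> d \<and> d \<le> 1 \<and> y0 - e < c \<and> d < y0 + e \<longrightarrow> R c d"
      by blast
  qed simp
  then show ?thesis unfolding R_def by simp
qed

text \<open>The
  square is cut into thin strips, lifted one after the other.\<close>
lemma lift_over_square:
  fixes h :: "real \<times> real \<Rightarrow> 'b" and f :: "real \<Rightarrow> 'e"
  assumes cov: "stream_covering E C B D \<rho>"
    and h: "continuous_map (top_of_set ({0..1} \<times> {0..1})) B h"
    and f: "continuous_map (top_of_set {0..1}) E f" "\<And>y. y \<in> {0..1} \<Longrightarrow> \<rho> (f y) = h (0, y)"
  shows "\<exists>k. lifts_on E \<rho> h ({0..1} \<times> {0..1}) k \<and> (\<forall>y\<in>{0..1}. k (0, y) = f y)"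
proof -
  obtain \<delta> where "0 < \<delta>" and small: "\<And>T. T \<subseteq> {0..1} \<times> {0..1} \<Longrightarrow> diameter T < \<delta> \<Longrightarrow>
      \<exists>V. evenly_covered E C B D \<rho> V \<and> h ` T \<subseteq> V"
    by (rule evenly_covered_lebesgue_number[OF cov _ _ h]) (auto intro: compact_Times)
  define R where "R a b \<longleftrightarrow> (\<forall>f. continuous_map (top_of_set {0..1}) E f \<and> (\<forall>y\<in>{0..1}. \<rho> (f y) = h (a, y))
      \<longrightarrow> (\<exists>k. lifts_on E \<rho> h ({a..b} \<times> {0..1}) k \<and> (\<forall>y\<in>{0..1}. k (a, y) = f y)))" for a b
  have "R 0 1"
  proof (rule interval_local_to_global[where R = R])
    fix a b c :: real assume abc: "0 \<le> a" "a \<le> b" "b \<le> c" "c \<le> 1" and "R a b" "R b c"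
    show "R a c" unfolding R_def
    proof (intro allI impI)
      fix f assume "continuous_map (top_of_set {0..1}) E f \<and> (\<forall>y\<in>{0..1}. \<rho> (f y) = h (a, y))"
      then obtain k1 where k1: "lifts_on E \<rho> h ({a..b} \<times> {0..1}) k1" "\<forall>y\<in>{0..1}. k1 (a, y) = f y"
        using \<open>R a b\<close> unfolding R_def by blast
      have "continuous_map (top_of_set {0..1}) E (\<lambda>y. k1 (b, y))"
        "\<forall>y\<in>{0..1}. \<rho> (k1 (b, y)) = h (b, y)"
        using k1(1) abc unfolding lifts_on_def by (auto intro: continuous_map_slice_snd)
      then obtain k2 where k2: "lifts_on E \<rho> h ({b..c} \<times> {0..1}) k2" "\<forall>y\<in>{0..1}. k2 (b, y) = k1 (b, y)"
        using \<open>R b c\<close> unfolding R_def by blast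
      have "lifts_on E \<rho> h ({a..c} \<times> {0..1}) (\<lambda>w. if fst w \<le> b then k1 w else k2 w)"
        by (rule lifts_on_paste[OF _ k1(1) _ k2(1)]) (use k2(2) in \<open>auto intro: continuous_intros\<close>)
      then show "\<exists>k. lifts_on E \<rho> h ({a..c} \<times> {0..1}) k \<and> (\<forall>y\<in>{0..1}. k (a, y) = f y)"
        using k1(2) abc by force
    qed
  next
    fix z :: real
    have "R a b" if "0 \<le> a" "a \<le> b" "b \<le> 1" "z - \<delta> / 4 < a" "b < z + \<delta> / 4" for a b
      using lift_over_strip[OF cov h small] that unfolding R_def by auto
    then show "\<exists>e>0. \<forall>a b. 0 \<le> a \<and> a \<le> b \<and> b \<le> 1 \<and> z - e < a \<and> b < z + e \<longrightarrow> R a b"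
      using \<open>0 < \<delta>\<close> by (intro exI[of _ "\<delta> / 4"]) auto
  qed simp
  then show ?thesis using f unfolding R_def by blast
qed

lemma continuous_map_I01_flip: "continuous_map I01 I01 (\<lambda>t. 1 - t)"
  unfolding I01_def continuous_map_subtopology_eu by (auto intro!: continuous_intros)

text \<open>Continuous path lifting from the initial point: the special case of square
  lifting for a homotopy that is constant in the second variable.\<close>
lemma continuous_path_lift:
  assumes cov: "stream_covering E C B D \<rho>" and \<gamma>: "continuous_map I01 B \<gamma>"
    and e: "e \<in> topspace E" "\<rho> e = \<gamma> 0"
  obtains \<gamma>' where "continuous_map I01 E \<gamma>'" "\<gamma>' 0 = e" "\<And>t. t \<in> {0..1} \<Longrightarrow> \<rho> (\<gamma>' t) = \<gamma> t"
proof -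
  have "continuous_map (top_of_set ({0..1} \<times> {0..1})) I01 fst"
    unfolding I01_def continuous_map_subtopology_eu by (auto intro!: continuous_intros)
  then have h: "continuous_map (top_of_set ({0..1} \<times> {0..1})) B (\<lambda>w. \<gamma> (fst w))"
    using continuous_map_compose[OF _ \<gamma>] by (simp add: o_def)
  have const: "continuous_map (top_of_set {0..1}) E (\<lambda>y. e)" using e by simp
  have "\<exists>k. lifts_on E \<rho> (\<lambda>w. \<gamma> (fst w)) ({0..1} \<times> {0..1::real}) k \<and> (\<forall>y\<in>{0..1}. k (0, y) = e)"
    using lift_over_square[OF cov h const] e by simp
  then obtain k where k: "lifts_on E \<rho> (\<lambda>w. \<gamma> (fst w)) ({0..1} \<times> {0..1::real}) k"
    and k0: "\<forall>y\<in>{0..1}. k (0, y) = e"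
    by blast
  show ?thesis
  proof
    show "continuous_map I01 E (\<lambda>t. k (t, 0))"
      using k unfolding lifts_on_def I01_def by (auto intro: continuous_map_slice_fst)
    show "k (0, 0) = e" using k0 by simp
    show "\<rho> (k (t, 0)) = \<gamma> t" if "t \<in> {0..1}" for t
      using k that unfolding lifts_on_def by auto
  qed
qed

text \<open>Lifting from the
  final point reduces to the continuous lifting of the reversed path.\<close>
lemma dipath_lift:
  assumes cov: "stream_covering E C B D \<rho>" and circE: "circulation E C"
    and \<gamma>: "dipath B D \<gamma>" and a: "a = 0 \<or> a = 1"
    and e: "e \<in> topspace E" "\<rho> e = \<gamma> a"
  obtains \<gamma>' where "dipath E C \<gamma>'" "\<gamma>' a = e" "\<And>t. t \<in> {0..1} \<Longrightarrow> \<rho> (\<gamma>' t) = \<gamma> t"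
proof -
  have "\<exists>\<gamma>'. continuous_map I01 E \<gamma>' \<and> \<gamma>' a = e \<and> (\<forall>t\<in>{0..1}. \<rho> (\<gamma>' t) = \<gamma> t)"
    using a
  proof
    assume "a = 0"
    obtain \<gamma>' where "continuous_map I01 E \<gamma>'" "\<gamma>' 0 = e" "\<And>t. t \<in> {0..1} \<Longrightarrow> \<rho> (\<gamma>' t) = \<gamma> t"
      using continuous_path_lift[OF cov dipath_continuous[OF \<gamma>] e(1)] e(2) \<open>a = 0\<close> by blast
    then show ?thesis using \<open>a = 0\<close> by blast
  next
    assume "a = 1"
    have "continuous_map I01 B (\<gamma> \<circ> (\<lambda>t. 1 - t))"
      using continuous_map_compose[OF continuous_map_I01_flip dipath_continuous[OF \<gamma>]] .
    then obtain \<gamma>r where \<gamma>r: "continuous_map I01 E \<gamma>r" "\<gamma>r 0 = e"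
      "\<And>t. t \<in> {0..1} \<Longrightarrow> \<rho> (\<gamma>r t) = \<gamma> (1 - t)"
      by (rule continuous_path_lift[OF cov _ e(1)]) (use e(2) \<open>a = 1\<close> in auto)
    have "continuous_map I01 E (\<gamma>r \<circ> (\<lambda>t. 1 - t))"
      using continuous_map_compose[OF continuous_map_I01_flip \<gamma>r(1)] .
    moreover have "\<forall>t\<in>{0..1}. \<rho> ((\<gamma>r \<circ> (\<lambda>t. 1 - t)) t) = \<gamma> t" using \<gamma>r(3) by auto
    ultimately show ?thesis using \<gamma>r(2) \<open>a = 1\<close> by (intro exI[of _ "\<gamma>r \<circ> (\<lambda>t. 1 - t)"]) auto
  qed
  then obtain \<gamma>' where \<gamma>': "continuous_map I01 E \<gamma>'" "\<gamma>' a = e"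
    and lift: "\<And>t. t \<in> {0..1} \<Longrightarrow> \<rho> (\<gamma>' t) = \<gamma> t"
    by blast
  have "dipath E C \<gamma>'" by (rule continuous_lift_is_dipath[OF cov circE \<gamma>'(1) \<gamma> lift])
  then show ?thesis using that \<gamma>'(2) lift by blast
qed

lemma dihomotopic_refl: "dipath X C \<gamma> \<Longrightarrow> dihomotopic X C (\<gamma> 0) (\<gamma> 1) \<gamma> \<gamma>"
  unfolding dihomotopic_def by (simp add: dipath_continuous)

lemma dihomotopic_sym: "dihomotopic X C x y \<gamma> \<delta> \<Longrightarrow> dihomotopic X C x y \<delta> \<gamma>"
  unfolding dihomotopic_def by (rule homotopic_with_symD)

lemma dihomotopic_trans:
  "dihomotopic X C x y \<gamma> \<delta> \<Longrightarrow> dihomotopic X C x y \<delta> \<epsilon> \<Longrightarrow> dihomotopic X C x y \<gamma> \<epsilon>"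
  unfolding dihomotopic_def by (rule homotopic_with_trans)

lemma dihomotopic_imp_dipaths:
  "dihomotopic X C x y \<gamma> \<delta> \<Longrightarrow> dipath X C \<gamma> \<and> \<gamma> 0 = x \<and> \<gamma> 1 = y \<and> dipath X C \<delta> \<and> \<delta> 0 = x \<and> \<delta> 1 = y"
  unfolding dihomotopic_def by (drule homotopic_with_imp_property) simp

lemma dihomotopic_cong:
  assumes "dihomotopic X C x y \<gamma> \<delta>"
    and "\<And>t. t \<in> {0..1} \<Longrightarrow> \<gamma>' t = \<gamma> t" "\<And>t. t \<in> {0..1} \<Longrightarrow> \<delta>' t = \<delta> t"
  shows "dihomotopic X C x y \<gamma>' \<delta>'"
  using assms(1) unfolding dihomotopic_def
proof (rule homotopic_with_eq)
  fix j k :: "real \<Rightarrow> 'a" assume jk: "\<And>t. t \<in> topspace I01 \<Longrightarrow> j t = k t"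
  then have "dipath X C j \<longleftrightarrow> dipath X C k" by (metis dipath_cong topspace_I01)
  moreover have "j 0 = k 0" "j 1 = k 1" using jk by auto
  ultimately show "(dipath X C j \<and> j 0 = x \<and> j 1 = y) \<longleftrightarrow> (dipath X C k \<and> k 0 = x \<and> k 1 = y)"
    by simp
qed (use assms(2,3) in auto)

lemma dihomotopic_stream_map:
  assumes f: "stream_map X C Y D f" and h: "dihomotopic X C x y \<gamma> \<delta>"
  shows "dihomotopic Y D (f x) (f y) (f \<circ> \<gamma>) (f \<circ> \<delta>)"
  unfolding dihomotopic_def
proof (rule homotopic_with_compose_continuous_map_left[OF h[unfolded dihomotopic_def]])
  show "continuous_map X Y f" using f unfolding stream_map_def by blast
qed (use dipath_compose[OF f] in auto)

lemma lift_of_constant_path: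
  assumes cov: "stream_covering E C B D \<rho>" and k: "continuous_map I01 E k"
    and const: "\<And>s. s \<in> {0..1} \<Longrightarrow> \<rho> (k s) = \<rho> (k 0)" and s: "s \<in> {0..1}"
  shows "k s = k 0"
proof -
  have "k 0 \<in> topspace E" using continuous_map_image_subset_topspace[OF k] by auto
  then have constant_map: "continuous_map I01 E (\<lambda>_. k 0)" by simp
  have same_image: "\<rho> (k z) = \<rho> ((\<lambda>_. k 0) z)" if "z \<in> topspace I01" for z
    using const[of z] that by simp
  have "connected_space I01" unfolding I01_def by (rule connected_space_Icc)
  moreover have "0 \<in> topspace I01" "s \<in> topspace I01" using s by auto
  ultimately show ?thesis
    using lifts_agree_on_connected[OF cov k constant_map same_image] by blast
qed

text \<open>A dihomotopy \<open>H\<close> downstairs is lifted to a map \<open>k\<close> of the square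
  extending the first dipath; by uniqueness of lifts, \<open>k\<close> keeps the endpoints
  fixed (the endpoints of \<open>H\<close> are fixed) and ends with the second dipath (both
  lift the same path and agree at \<open>a\<close>); each stage is a dipath, being a
  continuous lift of a dipath.\<close>
lemma dihomotopy_lift:
  assumes cov: "stream_covering E C B D \<rho>" and circE: "circulation E C"
    and a: "a = 0 \<or> a = 1"
    and \<gamma>1: "dipath E C \<gamma>1" and \<gamma>2: "dipath E C \<gamma>2" and same_end: "\<gamma>1 a = \<gamma>2 a"
    and hom: "dihomotopic B D x y (\<rho> \<circ> \<gamma>1) (\<rho> \<circ> \<gamma>2)"
  shows "dihomotopic E C (\<gamma>1 0) (\<gamma>1 1) \<gamma>1 \<gamma>2"
proof -
  define Q :: "(real \<times> real) set" where "Q = {0..1} \<times> {0..1}"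
  obtain H where H: "continuous_map (top_of_set Q) B H"
    and H0: "\<And>t. H (0, t) = \<rho> (\<gamma>1 t)" and H1: "\<And>t. H (1, t) = \<rho> (\<gamma>2 t)"
    and Hs: "\<And>s. s \<in> {0..1} \<Longrightarrow> dipath B D (\<lambda>t. H (s, t)) \<and> H (s, 0) = x \<and> H (s, 1) = y"
    using hom unfolding dihomotopic_def homotopic_with_def I01_square Q_def by auto
  obtain k where k: "lifts_on E \<rho> H Q k" and k0: "\<And>t. t \<in> {0..1} \<Longrightarrow> k (0, t) = \<gamma>1 t"
    using lift_over_square[OF cov H[unfolded Q_def]] dipath_continuous[OF \<gamma>1] H0
    unfolding Q_def I01_def by force
  have k_cont: "continuous_map (top_of_set Q) E k" and k_lift: "\<And>w. w \<in> Q \<Longrightarrow> \<rho> (k w) = H w"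
    using k unfolding lifts_on_def by auto
  have stage: "continuous_map I01 E (\<lambda>t. k (s, t))" if "s \<in> {0..1}" for s
    using continuous_map_slice_snd[OF k_cont[unfolded Q_def] that] by (simp add: I01_def)
  have fixed_ends: "k (s, t) = \<gamma>1 t" if s: "s \<in> {0..1}" and t: "t = 0 \<or> t = 1" for s t
  proof -
    have "continuous_map I01 E (\<lambda>s. k (s, t))"
      using continuous_map_slice_fst[OF k_cont[unfolded Q_def]] t by (auto simp: I01_def)
    moreover have "\<rho> (k (s', t)) = \<rho> (k (0, t))" if "s' \<in> {0..1}" for s'
    proof -
      have "H (s', t) = H (0, t)" using Hs[of s'] Hs[of 0] t that by auto
      then show ?thesis using that t k_lift[of "(s', t)"] k_lift[of "(0, t)"] by (auto simp: Q_def)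
    qed
    ultimately have "k (s, t) = k (0, t)" by (rule lift_of_constant_path[OF cov _ _ s])
    then show ?thesis using k0 t by auto
  qed
  have final_stage: "k (1, t) = \<gamma>2 t" if t: "t \<in> {0..1}" for t
  proof -
    have "\<rho> (k (1, t')) = \<rho> (\<gamma>2 t')" if "t' \<in> topspace I01" for t'
      using that k_lift H1 by (simp add: Q_def)
    moreover have "k (1, a) = \<gamma>2 a" using fixed_ends[of 1 a] a same_end by auto
    ultimately show ?thesis
      using lifts_agree_on_connected[OF cov stage[of 1] dipath_continuous[OF \<gamma>2], of a t]
        connected_space_Icc a t by (auto simp: I01_def)
  qed
  have "dihomotopic E C (\<gamma>1 0) (\<gamma>1 1) (\<lambda>t. k (0, t)) (\<lambda>t. k (1, t))"
    unfolding dihomotopic_def homotopic_with_def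
  proof (intro exI[of _ k] conjI allI ballI)
    show "continuous_map (prod_topology (top_of_set {0..1}) I01) E k"
      using k_cont by (simp add: I01_square Q_def)
    fix s :: real assume s: "s \<in> {0..1}"
    show "dipath E C (\<lambda>t. k (s, t))"
      by (rule continuous_lift_is_dipath[OF cov circE stage[OF s], where \<delta> = "\<lambda>t. H (s, t)"])
         (use Hs s k_lift in \<open>auto simp: Q_def\<close>)
  qed (use fixed_ends in auto)
  then show ?thesis by (rule dihomotopic_cong) (use k0 final_stage in auto)
qed

definition dipath_class :: "'a topology \<Rightarrow> ('a set \<Rightarrow> 'a \<Rightarrow> 'a \<Rightarrow> bool) \<Rightarrow> (real \<Rightarrow> 'a) \<Rightarrow> (real \<Rightarrow> 'a) set"
  where "dipath_class X C \<gamma> = {\<delta>. dihomotopic X C (\<gamma> 0) (\<gamma> 1) \<gamma> \<delta>}"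

lemma T1_hom_iff:
  "f \<in> T1_hom X C x y \<longleftrightarrow> (\<exists>\<gamma>. dipath X C \<gamma> \<and> \<gamma> 0 = x \<and> \<gamma> 1 = y \<and> f = dipath_class X C \<gamma>)"
  unfolding T1_hom_def dipath_class_def by auto

lemma dipath_class_eq_iff:
  assumes \<gamma>: "dipath X C \<gamma>"
  shows "dipath_class X C \<gamma> = dipath_class X C \<delta> \<longleftrightarrow> dihomotopic X C (\<gamma> 0) (\<gamma> 1) \<gamma> \<delta>"
proof
  assume "dipath_class X C \<gamma> = dipath_class X C \<delta>"
  then have "\<gamma> \<in> dipath_class X C \<delta>"
    using dihomotopic_refl[OF \<gamma>] by (auto simp: dipath_class_def)
  then have "dihomotopic X C (\<delta> 0) (\<delta> 1) \<delta> \<gamma>" by (simp add: dipath_class_def)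
  then show "dihomotopic X C (\<gamma> 0) (\<gamma> 1) \<gamma> \<delta>"
    using dihomotopic_imp_dipaths[of X C "\<delta> 0" "\<delta> 1" \<delta> \<gamma>] dihomotopic_sym by simp
next
  assume h: "dihomotopic X C (\<gamma> 0) (\<gamma> 1) \<gamma> \<delta>"
  then have "\<delta> 0 = \<gamma> 0" "\<delta> 1 = \<gamma> 1" using dihomotopic_imp_dipaths[OF h] by auto
  then have "dihomotopic X C (\<gamma> 0) (\<gamma> 1) \<gamma> \<epsilon> \<longleftrightarrow> dihomotopic X C (\<delta> 0) (\<delta> 1) \<delta> \<epsilon>" for \<epsilon>
    using h dihomotopic_trans[OF h] dihomotopic_trans[OF dihomotopic_sym[OF h]] by auto
  then show "dipath_class X C \<gamma> = dipath_class X C \<delta>" unfolding dipath_class_def by blast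
qed

lemma T1_map_dipath_class:
  assumes \<rho>: "stream_map E C B D \<rho>" and \<gamma>: "dipath E C \<gamma>"
  shows "T1_map B D \<rho> (\<gamma> 0) (\<gamma> 1) (dipath_class E C \<gamma>) = dipath_class B D (\<rho> \<circ> \<gamma>)"
proof (intro set_eqI iffI)
  fix \<delta> assume "\<delta> \<in> T1_map B D \<rho> (\<gamma> 0) (\<gamma> 1) (dipath_class E C \<gamma>)"
  then obtain \<gamma>' where "dihomotopic E C (\<gamma> 0) (\<gamma> 1) \<gamma> \<gamma>'"
    and "dihomotopic B D (\<rho> (\<gamma> 0)) (\<rho> (\<gamma> 1)) (\<rho> \<circ> \<gamma>') \<delta>"
    unfolding T1_map_def dipath_class_def by blast
  then show "\<delta> \<in> dipath_class B D (\<rho> \<circ> \<gamma>)"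
    using dihomotopic_stream_map[OF \<rho>] dihomotopic_trans unfolding dipath_class_def by fastforce
next
  fix \<delta> assume "\<delta> \<in> dipath_class B D (\<rho> \<circ> \<gamma>)"
  then show "\<delta> \<in> T1_map B D \<rho> (\<gamma> 0) (\<gamma> 1) (dipath_class E C \<gamma>)"
    using dihomotopic_refl[OF \<gamma>] unfolding T1_map_def dipath_class_def by auto
qed

text \<open>The categories \<open>T\<^sub>1 X\<close> and \<open>(T\<^sub>1 X)\<^sup>o\<^sup>p\<close> are treated uniformly: for
  \<open>a \<in> {0, 1}\<close>, a morphism from \<open>x\<close> to \<open>y\<close> is a class of dipaths \<open>\<gamma>\<close> with
  \<open>\<gamma> a = x\<close> and \<open>\<gamma> (1 - a) = y\<close>; \<open>a = 0\<close> gives \<open>T\<^sub>1 X\<close>, \<open>a = 1\<close> its opposite.\<close>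
definition oriented :: "real \<Rightarrow> 'a \<Rightarrow> 'a \<Rightarrow> 'a \<times> 'a"
  where "oriented a x y = (if a = 0 then (x, y) else (y, x))"

lemma T1_hom_oriented_iff:
  assumes "a = 0 \<or> a = 1"
  shows "f \<in> case_prod (T1_hom X C) (oriented a x y) \<longleftrightarrow>
    (\<exists>\<gamma>. dipath X C \<gamma> \<and> \<gamma> a = x \<and> \<gamma> (1 - a) = y \<and> f = dipath_class X C \<gamma>)"
proof (cases "a = 0")
  case True
  then show ?thesis by (simp add: oriented_def T1_hom_iff)
next
  case False
  then have "a = 1" using assms by simp
  then show ?thesis by (simp add: oriented_def T1_hom_iff) blast
qed

lemma T1_map_oriented:
  assumes "a = 0 \<or> a = 1" and "stream_map E C B D \<rho>" "dipath E C \<gamma>"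
  shows "case_prod (T1_map B D \<rho>) (oriented a (\<gamma> a) (\<gamma> (1 - a))) (dipath_class E C \<gamma>) =
    dipath_class B D (\<rho> \<circ> \<gamma>)"
  using assms(1) T1_map_dipath_class[OF assms(2,3)] unfolding oriented_def by (elim disjE) simp_all

lemma lifted_classes_unique:
  assumes cov: "stream_covering E C B D \<rho>" and circE: "circulation E C" and a: "a = 0 \<or> a = 1"
    and \<gamma>1: "dipath E C \<gamma>1" and \<gamma>2: "dipath E C \<gamma>2" and same_end: "\<gamma>1 a = \<gamma>2 a"
    and same_image: "dipath_class B D (\<rho> \<circ> \<gamma>1) = dipath_class B D (\<rho> \<circ> \<gamma>2)"
  shows "\<gamma>2 (1 - a) = \<gamma>1 (1 - a) \<and> dipath_class E C \<gamma>2 = dipath_class E C \<gamma>1"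
proof -
  have "dihomotopic B D (\<rho> (\<gamma>1 0)) (\<rho> (\<gamma>1 1)) (\<rho> \<circ> \<gamma>1) (\<rho> \<circ> \<gamma>2)"
    using same_image dipath_class_eq_iff[OF dipath_compose[OF covering_stream_map[OF cov] \<gamma>1]]
    by (metis comp_apply)
  then have hom: "dihomotopic E C (\<gamma>1 0) (\<gamma>1 1) \<gamma>1 \<gamma>2"
    by (rule dihomotopy_lift[OF cov circE a \<gamma>1 \<gamma>2 same_end])
  then have "\<gamma>2 (1 - a) = \<gamma>1 (1 - a)" using dihomotopic_imp_dipaths[OF hom] a by auto
  moreover have "dipath_class E C \<gamma>1 = dipath_class E C \<gamma>2"
    using hom dipath_class_eq_iff[OF \<gamma>1] by simp
  ultimately show ?thesis by simp
qed

text \<open>Unique lifting of morphisms along \<open>T\<^sub>1 \<rho>\<close>, in either orientation: existence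
  by dipath lifting, uniqueness by dihomotopy lifting.\<close>
lemma T1_oriented_op_fibration:
  assumes cov: "stream_covering E C B D \<rho>" and circE: "circulation E C" and a: "a = 0 \<or> a = 1"
  shows "op_fibration (topspace E) (\<lambda>x y. case_prod (T1_hom E C) (oriented a x y))
           (topspace B) (\<lambda>x y. case_prod (T1_hom B D) (oriented a x y))
           \<rho> (\<lambda>x y. case_prod (T1_map B D \<rho>) (oriented a x y))"
  unfolding op_fibration_def
proof (intro ballI)
  have \<rho>: "stream_map E C B D \<rho>" using cov by (rule covering_stream_map)
  have a01: "1 - a \<in> {0..1}" using a by auto
  fix c d g assume c: "c \<in> topspace E" and "d \<in> topspace B"
    and "g \<in> case_prod (T1_hom B D) (oriented a (\<rho> c) d)"
  then obtain \<gamma> where \<gamma>: "dipath B D \<gamma>" "\<gamma> a = \<rho> c" "\<gamma> (1 - a) = d" and g: "g = dipath_class B D \<gamma>"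
    unfolding T1_hom_oriented_iff[OF a] by blast
  obtain \<gamma>' where \<gamma>': "dipath E C \<gamma>'" "\<gamma>' a = c" and lift: "\<And>t. t \<in> {0..1} \<Longrightarrow> \<rho> (\<gamma>' t) = \<gamma> t"
    using dipath_lift[OF cov circE \<gamma>(1) a c \<gamma>(2)[symmetric]] by blast
  have "dihomotopic B D (\<gamma> 0) (\<gamma> 1) \<gamma> (\<rho> \<circ> \<gamma>')"
    by (rule dihomotopic_cong[OF dihomotopic_refl[OF \<gamma>(1)]]) (use lift in auto)
  then have image: "dipath_class B D (\<rho> \<circ> \<gamma>') = g"
    using dipath_class_eq_iff[OF \<gamma>(1)] g by metis
  show "\<exists>!p. fst p \<in> topspace E \<and> snd p \<in> case_prod (T1_hom E C) (oriented a c (fst p)) \<and>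
      \<rho> (fst p) = d \<and> case_prod (T1_map B D \<rho>) (oriented a c (fst p)) (snd p) = g"
  proof (rule ex1I[of _ "(\<gamma>' (1 - a), dipath_class E C \<gamma>')"], goal_cases)
    case 1
    have "\<gamma>' (1 - a) \<in> topspace E" using dipath_in_topspace[OF \<gamma>'(1) a01] .
    moreover have "dipath_class E C \<gamma>' \<in> case_prod (T1_hom E C) (oriented a c (\<gamma>' (1 - a)))"
      unfolding T1_hom_oriented_iff[OF a] using \<gamma>' by blast
    moreover have "\<rho> (\<gamma>' (1 - a)) = d" using lift[OF a01] \<gamma>(3) by simp
    moreover have "case_prod (T1_map B D \<rho>) (oriented a c (\<gamma>' (1 - a))) (dipath_class E C \<gamma>') = g"
      using T1_map_oriented[OF a \<rho> \<gamma>'(1)] \<gamma>'(2) image by simp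
    ultimately show ?case by simp
  next
    case (2 p)
    then obtain \<gamma>2 where \<gamma>2: "dipath E C \<gamma>2" "\<gamma>2 a = c" "\<gamma>2 (1 - a) = fst p"
      and p2: "snd p = dipath_class E C \<gamma>2"
      unfolding T1_hom_oriented_iff[OF a] by blast
    have "case_prod (T1_map B D \<rho>) (oriented a c (fst p)) (snd p) = g" using 2 by blast
    then have "dipath_class B D (\<rho> \<circ> \<gamma>') = dipath_class B D (\<rho> \<circ> \<gamma>2)"
      using T1_map_oriented[OF a \<rho> \<gamma>2(1)] \<gamma>2(2,3) p2 image by simp
    then show ?case
      using lifted_classes_unique[OF cov circE a \<gamma>'(1) \<gamma>2(1)] \<gamma>'(2) \<gamma>2(2,3) p2
      by (simp add: prod_eq_iff)
  qed
qed

text \<open>Main theorem: the orientations \<open>a = 0\<close> and \<open>a = 1\<close> of the previous lemma are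
  literally the statements for \<open>T\<^sub>1 \<rho>\<close> and for its opposite functor.\<close>
theorem mainTheorem11:
  fixes E :: "'e topology" and C :: "'e set \<Rightarrow> 'e \<Rightarrow> 'e \<Rightarrow> bool"
    and B :: "'b topology" and D :: "'b set \<Rightarrow> 'b \<Rightarrow> 'b \<Rightarrow> bool"
    and \<rho> :: "'e \<Rightarrow> 'b"
  assumes "circulation E C" and "circulation B D"
    and "stream_covering E C B D \<rho>"
  shows "op_fibration (topspace E) (T1_hom E C) (topspace B) (T1_hom B D) \<rho> (T1_map B D \<rho>)
       \<and> op_fibration (topspace E) (op_hom (T1_hom E C)) (topspace B) (op_hom (T1_hom B D))
           \<rho> (op_fmap (T1_map B D \<rho>))"
proof
  show "op_fibration (topspace E) (T1_hom E C) (topspace B) (T1_hom B D) \<rho> (T1_map B D \<rho>)"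
    using T1_oriented_op_fibration[OF assms(3,1), of 0] by (simp add: oriented_def)
  show "op_fibration (topspace E) (op_hom (T1_hom E C)) (topspace B) (op_hom (T1_hom B D))
      \<rho> (op_fmap (T1_map B D \<rho>))"
    using T1_oriented_op_fibration[OF assms(3,1), of 1]
    by (simp add: oriented_def op_hom_def[abs_def] op_fmap_def[abs_def])
qed

end
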